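(* Every locally sofic monoid is sofic.
   Context: A monoid is locally sofic if every finitely generated submonoid of it is sofic (submonoids contain the identity). For a non-empty finite set $X$, $\mathrm{Map}(X)$ is the monoid of all maps $X\to X$ under composition (identity $\mathrm{Id}_X$) with the Hamming metric $d_X(f,g)=|\{x\in X : f(x)\ne g(x)\}|/|X|$. For a monoid $M$, finite $K\subset M$ and $\varepsilon,\alpha>0$, a map $\varphi\colon M\to\mathrm{Map}(X)$ is a $(K,\varepsilon)$-morphism if $d_X(\varphi(k_1k_2),\varphi(k_1)\varphi(k_2))\le\varepsilon$ for all $k_1,k_2\in K$ and $d_X(\varphi(1_M),\mathrm{Id}_X)\le\varepsilon$; it is $(K,\alpha)$-injective if $d_X(\varphi(k_1),\varphi(k_2))\ge\alpha$ for all distinct $k_1,k_2\in K$. $M$ is sofic if for every finite $K\subset M$ and every $\varepsilon>0$ there exist a non-empty finite set $X$ and a $(K,1-\varepsilon)$-injective $(K,\varepsilon)$-morphism $\varphi\colon M\to\mathrm{Map}(X)$. *)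

theory Defs
  imports Complex_Main "HOL-Algebra.Group"
begin

text \<open>Finite sets X are taken as finite subsets of nat (every finite set is in
bijection with one). An element of Map(X) is represented by a function
nat => nat that maps X into X; only its values on X matter.\<close>

definition ham_dist :: "nat set \<Rightarrow> (nat \<Rightarrow> nat) \<Rightarrow> (nat \<Rightarrow> nat) \<Rightarrow> real" where
  "ham_dist X f g = real (card {x \<in> X. f x \<noteq> g x}) / real (card X)"

definition is_KE_morphism ::
  "('a, 'b) monoid_scheme \<Rightarrow> nat set \<Rightarrow> ('a \<Rightarrow> nat \<Rightarrow> nat) \<Rightarrow> 'a set \<Rightarrow> real \<Rightarrow> bool" where
  "is_KE_morphism M X \<phi> K \<epsilon> \<longleftrightarrow>
     (\<forall>k1\<in>K. \<forall>k2\<in>K. ham_dist X (\<phi> (k1 \<otimes>\<^bsub>M\<^esub> k2)) (\<phi> k1 \<circ> \<phi> k2) \<le> \<epsilon>)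
     \<and> ham_dist X (\<phi> \<one>\<^bsub>M\<^esub>) id \<le> \<epsilon>"

definition is_K_injective ::
  "nat set \<Rightarrow> ('a \<Rightarrow> nat \<Rightarrow> nat) \<Rightarrow> 'a set \<Rightarrow> real \<Rightarrow> bool" where
  "is_K_injective X \<phi> K \<alpha> \<longleftrightarrow>
     (\<forall>k1\<in>K. \<forall>k2\<in>K. k1 \<noteq> k2 \<longrightarrow> ham_dist X (\<phi> k1) (\<phi> k2) \<ge> \<alpha>)"

definition sofic :: "('a, 'b) monoid_scheme \<Rightarrow> bool" where
  "sofic M \<longleftrightarrow>
     (\<forall>K \<epsilon>. finite K \<and> K \<subseteq> carrier M \<and> \<epsilon> > 0 \<longrightarrow>
        (\<exists>X :: nat set. finite X \<and> X \<noteq> {} \<and>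
          (\<exists>\<phi> :: 'a \<Rightarrow> nat \<Rightarrow> nat.
             (\<forall>m \<in> carrier M. \<phi> m ` X \<subseteq> X)
             \<and> is_K_injective X \<phi> K (1 - \<epsilon>)
             \<and> is_KE_morphism M X \<phi> K \<epsilon>)))"

definition fg_submonoid :: "'a set \<Rightarrow> ('a, 'b) monoid_scheme \<Rightarrow> bool" where
  "fg_submonoid H M \<longleftrightarrow> submonoid H M \<and>
     (\<exists>A. finite A \<and> A \<subseteq> H \<and> (\<forall>H'. submonoid H' M \<and> A \<subseteq> H' \<longrightarrow> H \<subseteq> H'))"

definition locally_sofic :: "('a, 'b) monoid_scheme \<Rightarrow> bool" where
  "locally_sofic M \<longleftrightarrow> (\<forall>H. fg_submonoid H M \<longrightarrow> sofic (M\<lparr>carrier := H\<rparr>))"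

end

theory Submission
  imports Defs
begin

text \<open>A finite set K lies in the submonoid it generates, which is finitely generated and hence
sofic. A sofic approximation of that submonoid is one of M on K: the almost-morphism and
almost-injectivity conditions only involve K, products of elements of K and the identity, all of
which lie in the submonoid. Outside it the approximation is extended by the identity map.\<close>

definition submonoid_hull :: "('a, 'b) monoid_scheme \<Rightarrow> 'a set \<Rightarrow> 'a set" where
  "submonoid_hull M A = \<Inter>{H. submonoid H M \<and> A \<subseteq> H}"

lemma subset_submonoid_hull: "A \<subseteq> submonoid_hull M A"
  unfolding submonoid_hull_def by blast

lemma submonoid_carrier: "monoid M \<Longrightarrow> submonoid (carrier M) M"
  by (intro submonoid.intro) (auto simp: monoid.m_closed)

lemma submonoid_submonoid_hull:
  assumes "monoid M" and "A \<subseteq> carrier M"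
  shows "submonoid (submonoid_hull M A) M"
proof
  show "submonoid_hull M A \<subseteq> carrier M"
    unfolding submonoid_hull_def using submonoid_carrier[OF assms(1)] assms(2) by blast
  show "\<one>\<^bsub>M\<^esub> \<in> submonoid_hull M A"
    unfolding submonoid_hull_def by (simp add: submonoid.one_closed)
  fix x y
  assume "x \<in> submonoid_hull M A" "y \<in> submonoid_hull M A"
  then show "x \<otimes>\<^bsub>M\<^esub> y \<in> submonoid_hull M A"
    unfolding submonoid_hull_def by (simp add: submonoid.m_closed)
qed

lemma fg_submonoid_hull:
  assumes "monoid M" and "finite A" and "A \<subseteq> carrier M"
  shows "fg_submonoid (submonoid_hull M A) M"
  unfolding fg_submonoid_def
  using submonoid_submonoid_hull[OF assms(1,3)] assms(2) subset_submonoid_hull[of A M]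
  by (auto simp: submonoid_hull_def)

lemma is_KE_morphism_carrier_update:
  "is_KE_morphism (M\<lparr>carrier := H\<rparr>) X \<phi> K \<epsilon> = is_KE_morphism M X \<phi> K \<epsilon>"
  by (simp add: is_KE_morphism_def)

lemma is_K_injective_cong:
  "(\<And>k. k \<in> K \<Longrightarrow> \<phi> k = \<psi> k) \<Longrightarrow> is_K_injective X \<phi> K \<alpha> = is_K_injective X \<psi> K \<alpha>"
  by (simp add: is_K_injective_def)

lemma is_KE_morphism_cong:
  assumes "\<And>k. k \<in> K \<Longrightarrow> \<phi> k = \<psi> k"
    and "\<And>k1 k2. k1 \<in> K \<Longrightarrow> k2 \<in> K \<Longrightarrow> \<phi> (k1 \<otimes>\<^bsub>M\<^esub> k2) = \<psi> (k1 \<otimes>\<^bsub>M\<^esub> k2)"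
    and "\<phi> \<one>\<^bsub>M\<^esub> = \<psi> \<one>\<^bsub>M\<^esub>"
  shows "is_KE_morphism M X \<phi> K \<epsilon> = is_KE_morphism M X \<psi> K \<epsilon>"
  using assms by (simp add: is_KE_morphism_def)

lemma sofic_approximation_extend:
  assumes H: "submonoid H M" and KH: "K \<subseteq> H"
    and maps: "\<forall>m \<in> H. \<phi> m ` X \<subseteq> X"
    and inj: "is_K_injective X \<phi> K \<alpha>"
    and mor: "is_KE_morphism (M\<lparr>carrier := H\<rparr>) X \<phi> K \<epsilon>"
  defines "\<psi> \<equiv> \<lambda>m. if m \<in> H then \<phi> m else id"
  shows "\<forall>m \<in> carrier M. \<psi> m ` X \<subseteq> X"
    and "is_K_injective X \<psi> K \<alpha>"
    and "is_KE_morphism M X \<psi> K \<epsilon>"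
proof -
  have agree: "\<And>m. m \<in> H \<Longrightarrow> \<phi> m = \<psi> m"
    by (simp add: \<psi>_def)
  show "\<forall>m \<in> carrier M. \<psi> m ` X \<subseteq> X"
    using maps by (simp add: \<psi>_def)
  show "is_K_injective X \<psi> K \<alpha>"
    using inj is_K_injective_cong[of K \<phi> \<psi>] agree KH by blast
  have "is_KE_morphism M X \<phi> K \<epsilon>"
    using mor by (simp add: is_KE_morphism_carrier_update)
  moreover have "is_KE_morphism M X \<phi> K \<epsilon> = is_KE_morphism M X \<psi> K \<epsilon>"
    using KH by (intro is_KE_morphism_cong agree)
      (auto intro: submonoid.m_closed[OF H] submonoid.one_closed[OF H])
  ultimately show "is_KE_morphism M X \<psi> K \<epsilon>"
    by simp
qed

lemma sofic_if_finite_subsets_in_sofic_submonoids: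
  assumes "\<And>K. finite K \<Longrightarrow> K \<subseteq> carrier M \<Longrightarrow>
             \<exists>H. submonoid H M \<and> K \<subseteq> H \<and> sofic (M\<lparr>carrier := H\<rparr>)"
  shows "sofic M"
  unfolding sofic_def
proof (intro allI impI)
  fix K and \<epsilon> :: real
  assume K: "finite K \<and> K \<subseteq> carrier M \<and> \<epsilon> > 0"
  then obtain H where H: "submonoid H M" "K \<subseteq> H" "sofic (M\<lparr>carrier := H\<rparr>)"
    using assms by blast
  have "\<exists>X :: nat set. finite X \<and> X \<noteq> {} \<and>
          (\<exists>\<phi> :: 'a \<Rightarrow> nat \<Rightarrow> nat. (\<forall>m \<in> H. \<phi> m ` X \<subseteq> X)
             \<and> is_K_injective X \<phi> K (1 - \<epsilon>) \<and> is_KE_morphism (M\<lparr>carrier := H\<rparr>) X \<phi> K \<epsilon>)"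
    using H(3)[unfolded sofic_def, rule_format, of K \<epsilon>] K H(2) by simp
  then obtain X :: "nat set" and \<phi> :: "'a \<Rightarrow> nat \<Rightarrow> nat"
    where X: "finite X" "X \<noteq> {}" and maps: "\<forall>m \<in> H. \<phi> m ` X \<subseteq> X"
      and inj: "is_K_injective X \<phi> K (1 - \<epsilon>)"
      and mor: "is_KE_morphism (M\<lparr>carrier := H\<rparr>) X \<phi> K \<epsilon>"
    by blast
  note extended = sofic_approximation_extend[OF H(1,2) maps inj mor]
  show "\<exists>X :: nat set. finite X \<and> X \<noteq> {} \<and>
          (\<exists>\<psi> :: 'a \<Rightarrow> nat \<Rightarrow> nat. (\<forall>m \<in> carrier M. \<psi> m ` X \<subseteq> X)
             \<and> is_K_injective X \<psi> K (1 - \<epsilon>) \<and> is_KE_morphism M X \<psi> K \<epsilon>)"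
    using X extended by (intro exI conjI) assumption+
qed

theorem proposition3p6:
  fixes M :: "('a, 'b) monoid_scheme"
  assumes "monoid M"
    and "locally_sofic M"
  shows "sofic M"
proof (rule sofic_if_finite_subsets_in_sofic_submonoids)
  fix K
  assume "finite K" "K \<subseteq> carrier M"
  then have "fg_submonoid (submonoid_hull M K) M"
    using fg_submonoid_hull assms(1) by blast
  then show "\<exists>H. submonoid H M \<and> K \<subseteq> H \<and> sofic (M\<lparr>carrier := H\<rparr>)"
    using assms(2) subset_submonoid_hull[of K M]
    unfolding locally_sofic_def fg_submonoid_def by blast
qed

end
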